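(* Let $n\ge2$, $R>0$, $\alpha:=\sqrt[3]{9n-15}$ and $u^*(x):=-\alpha|x|^{1/3}$ for $x\in\overline{B_R}$ (constant in time). Then $u^*u^{*3}_r\in L^1_{loc}(B_R\times[0,\infty))$, $\nabla u^*\in L^1_{loc}(B_R\times[0,\infty))$, and for every $\varphi\in C_c^\infty(B_R\times(0,\infty))$ $$-\int_0^\infty\!\!\int_{B_R}\varphi_tu^*=-\int_0^\infty\!\!\int_{B_R}\nabla u^*\cdot\nabla\varphi+\int_0^\infty\!\!\int_{B_R}u^*(u^*_r)^3\varphi;$$ that is, $u^*$ is a weak solution of $u_t=\Delta u+uu_r^3$ in $B_R\times(0,\infty)$ with $u=u^*(R)$ on $\partial B_R$ and initial datum $u^*$.
   Context: $B_R=\{x\in\mathbb R^n:|x|<R\}$; $u^*_r$ denotes the radial derivative. *)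

theory Defs
  imports "HOL-Analysis.Analysis"
begin

fun dir_derivs :: "'a::real_normed_vector list \<Rightarrow> ('a \<Rightarrow> real) \<Rightarrow> 'a \<Rightarrow> real" where
  "dir_derivs [] f = f"
| "dir_derivs (v # vs) f = (\<lambda>x. frechet_derivative (dir_derivs vs f) (at x) v)"

definition smooth_fun :: "('a::real_normed_vector \<Rightarrow> real) \<Rightarrow> bool" where
  "smooth_fun f \<longleftrightarrow> (\<forall>vs. dir_derivs vs f differentiable_on UNIV)"

definition test_fun_on :: "'a::real_normed_vector set \<Rightarrow> ('a \<Rightarrow> real) \<Rightarrow> bool" where
  "test_fun_on U f \<longleftrightarrow> smooth_fun f \<and> compact (closure {z. f z \<noteq> 0})
      \<and> closure {z. f z \<noteq> 0} \<subseteq> U"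

definition loc_integrable_on ::
  "('a::euclidean_space \<Rightarrow> 'b::{banach, second_countable_topology}) \<Rightarrow> 'a set \<Rightarrow> bool" where
  "loc_integrable_on f S \<longleftrightarrow> (\<forall>K. compact K \<and> K \<subseteq> S \<longrightarrow> set_integrable lborel K f)"

definition grad :: "(real^'n \<Rightarrow> real) \<Rightarrow> real^'n \<Rightarrow> real^'n" where
  "grad f x = (\<chi> i. deriv (\<lambda>s. f (x + s *\<^sub>R axis i 1)) 0)"

definition radial_deriv :: "(real^'n \<Rightarrow> real) \<Rightarrow> real^'n \<Rightarrow> real" where
  "radial_deriv f x = deriv (\<lambda>r. f (r *\<^sub>R (x /\<^sub>R norm x))) (norm x)"

definition ustar :: "nat \<Rightarrow> real^'n \<Rightarrow> real" where
  "ustar n x = - root 3 (9 * real n - 15) * norm x powr (1/3)"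

end

theory Submission
  imports Defs
begin

(* The profile u = -a |x|^(1/3), with a^3 = 9n - 15, is smooth away from the origin, where
   grad u = -(a/3) |x|^(-5/3) x  and  u u_r^3 = (a/3) (n - 5/3) |x|^(-5/3).
   Both are locally integrable because |x|^(-p) is integrable near 0 for p < n (sum over
   dyadic shells), and neither depends on time, so the time-derivative term integrates to
   zero along every time line.  The spatial identity is the distributional formula
   div (|x|^(-p) x) = (n - p) |x|^(-p)  for p = 5/3 < n.  It holds for the smooth fields
   (|x|^2 + eps)^(-p/2) x, since integrals of partial derivatives of compactly supported
   functions vanish, and it survives eps -> 0 by dominated convergence with a majorant
   C |x|^(-p). *)

section \<open>Integrability of negative powers of the norm\<close>

lemma dyadic_shell:
  fixes r R :: real
  assumes "0 < r" "r \<le> R"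
  obtains k :: nat where "R / 2^(k+1) < r" "r \<le> R / 2^k"
proof -
  have ex: "\<exists>k::nat. R / 2^(k+1) < r"
  proof -
    obtain k :: nat where "R / r < 2^k" using real_arch_pow[of 2 "R/r"] by auto
    then have "R / 2^(k+1) < r" using assms by (simp add: field_simps)
    then show ?thesis ..
  qed
  define k where "k = (LEAST k::nat. R / 2^(k+1) < r)"
  have "R / 2^(k+1) < r" unfolding k_def by (rule LeastI_ex[OF ex])
  moreover have "r \<le> R / 2^k"
  proof (cases k)
    case (Suc j)
    then have "\<not> R / 2^(j+1) < r" using not_less_Least[of j "\<lambda>k. R / 2^(k+1) < r"] k_def by auto
    then show ?thesis using Suc by simp
  qed (use assms in simp)
  ultimately show ?thesis by (rule that)
qed

lemma summable_dyadic_shell_bound: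
  fixes R p :: real
  assumes "R > 0" "p < real n"
  shows "summable (\<lambda>k::nat. (R / 2^(k+1)) powr (-p) * (R / 2^k)^n)"
proof -
  define q :: real where "q = 2 powr p / 2^n"
  have "(2::real) powr p < 2 powr real n" using assms(2) by (intro powr_less_mono) auto
  then have q1: "q < 1" by (simp add: q_def powr_realpow)
  have "(R / 2^(k+1)) powr (-p) * (R / 2^k)^n = ((R/2) powr (-p) * R^n) * q^k" for k :: nat
  proof -
    have "(R / 2^(k+1)) powr (-p) = (R/2) powr (-p) * (2 powr p)^k"
      using assms(1) by (simp add: powr_divide powr_minus powr_mult powr_realpow[symmetric] 
          powr_powr field_simps flip: powr_power)
    then show ?thesis by (simp add: q_def power_divide field_simps flip: power_mult)
  qed
  then show ?thesis using q1 by (simp add: q_def summable_mult summable_geometric)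
qed

lemma indicator_norm_powr_le_dyadic_series:
  fixes R p :: real and x :: "'a::real_normed_vector"
  assumes "R > 0" "0 \<le> p"
  shows "ennreal (indicator (cball 0 R) x * norm x powr (-p))
      \<le> (\<Sum>k. ennreal ((R / 2^(k+1)) powr (-p)) * indicator (cball 0 (R / 2^k)) x)"
proof (cases "x \<noteq> 0 \<and> norm x \<le> R")
  case True
  then obtain k where k: "R / 2^(k+1) < norm x" "norm x \<le> R / 2^k"
    using dyadic_shell[of "norm x" R] by auto
  have "norm x powr (-p) \<le> (R / 2^(k+1)) powr (-p)"
    using k assms by (intro powr_mono2') auto
  then have "ennreal (indicator (cball 0 R) x * norm x powr (-p))
      \<le> ennreal ((R / 2^(k+1)) powr (-p)) * indicator (cball 0 (R / 2^k)) x"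
    using True k by (auto simp: indicator_def ennreal_leI)
  also have "\<dots> \<le> (\<Sum>k. ennreal ((R / 2^(k+1)) powr (-p)) * indicator (cball 0 (R / 2^k)) x)"
    using sum_le_suminf[OF summableI, of "{k}"
        "\<lambda>k. ennreal ((R / 2^(k+1)) powr (-p)) * indicator (cball 0 (R / 2^k)) x"]
    by (simp only: sum.insert sum.empty finite.intros zero_le simp_thms add_0_right empty_iff)
  finally show ?thesis .
qed (auto simp: indicator_def)

lemma set_integrable_norm_powr_cball:
  fixes R p :: real
  assumes "R > 0" "0 \<le> p" "p < DIM('a::euclidean_space)"
  shows "set_integrable lborel (cball (0::'a) R) (\<lambda>x. norm x powr (-p))"
proof -
  define b where "b k = (R / 2^(k+1)) powr (-p)" for k :: nat
  define c where "c k = R / 2^k" for k :: nat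
  have "(\<integral>\<^sup>+x. ennreal (indicator (cball 0 R) x * norm (x::'a) powr (-p)) \<partial>lborel)
      \<le> (\<integral>\<^sup>+x. (\<Sum>k. ennreal (b k) * indicator (cball (0::'a) (c k)) x) \<partial>lborel)"
    unfolding b_def c_def using assms
    by (intro nn_integral_mono indicator_norm_powr_le_dyadic_series) auto
  also have "\<dots> = (\<Sum>k. \<integral>\<^sup>+x. ennreal (b k) * indicator (cball (0::'a) (c k)) x \<partial>lborel)"
    by (intro nn_integral_suminf borel_measurable_times_ennreal borel_measurable_indicator) auto
  also have "\<dots> = (\<Sum>k. ennreal (b k * (unit_ball_vol DIM('a) * c k ^ DIM('a))))"
    using assms(1)
    by (subst nn_integral_cmult_indicator) (auto simp: emeasure_cball b_def c_def ennreal_mult)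
  also have "\<dots> = ennreal (\<Sum>k. b k * (unit_ball_vol DIM('a) * c k ^ DIM('a)))"
  proof (rule suminf_ennreal2)
    have "summable (\<lambda>k. unit_ball_vol DIM('a) * (b k * c k ^ DIM('a)))"
      unfolding b_def c_def using assms by (intro summable_mult summable_dyadic_shell_bound) auto
    then show "summable (\<lambda>k. b k * (unit_ball_vol DIM('a) * c k ^ DIM('a)))"
      by (simp add: mult_ac)
  qed (use assms(1) in \<open>auto simp: b_def c_def\<close>)
  also have "\<dots> < \<infinity>" by simp
  finally have "integrable lborel (\<lambda>x::'a. indicator (cball 0 R) x * norm x powr (-p))"
    by (intro integrableI_nonneg) (measurable, auto)
  then show ?thesis by (simp add: set_integrable_def)
qed

lemma loc_integrable_on_time_independent:
  fixes F :: "'a::euclidean_space \<Rightarrow> 'b::{banach, second_countable_topology}"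
  assumes F: "set_integrable lborel A F" and A: "A \<in> sets borel"
  shows "loc_integrable_on (\<lambda>(x, t::real). F x) (A \<times> T)"
  unfolding loc_integrable_on_def
proof safe
  fix K :: "('a \<times> real) set"
  assume K: "compact K" "K \<subseteq> A \<times> T"
  obtain B where B: "\<And>z. z \<in> K \<Longrightarrow> norm z \<le> B"
    using compact_imp_bounded[OF K(1)] bounded_iff by blast
  have KB: "K \<subseteq> A \<times> {-B..B}"
  proof
    fix z assume "z \<in> K"
    moreover have "\<bar>snd z\<bar> \<le> B" using B[OF \<open>z \<in> K\<close>] norm_snd_le[of "snd z" "fst z"] by simp
    ultimately show "z \<in> A \<times> {-B..B}" using K(2) by (auto simp: mem_Times_iff)
  qed
  define G where "G x = indicator A x *\<^sub>R F x" for x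
  have G: "integrable lborel G" using F by (simp add: G_def[abs_def] set_integrable_def)
  have [measurable]: "G \<in> borel_measurable borel" using borel_measurable_integrable[OF G] by simp
  have "integrable (lborel \<Otimes>\<^sub>M lborel) (\<lambda>(x, t). indicator {-B..B} t *\<^sub>R G x)"
  proof (rule lborel_pair.Fubini_integrable)
    have "(\<lambda>x. LINT t|lborel. norm (indicator {-B..B} t *\<^sub>R G x)) = (\<lambda>x. measure lborel {-B..B} * norm (G x))"
      by (simp add: abs_mult)
    then show "integrable lborel (\<lambda>x. LINT t|lborel. norm (case (x, t) of (x, t) \<Rightarrow> indicator {-B..B} t *\<^sub>R G x))"
      using G by simp
  qed (auto intro!: AE_I2 integrable_scaleR_left integrable_real_indicator simp: emeasure_lborel_Icc_eq)
  then have "set_integrable lborel (A \<times> {-B..B}) (\<lambda>(x, t). F x)"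
    by (simp add: set_integrable_def lborel_prod G_def indicator_times case_prod_unfold mult.commute)
  then show "set_integrable lborel K (\<lambda>(x, t). F x)"
    by (rule set_integrable_subset) (use K KB in \<open>auto intro: borel_compact\<close>)
qed

section \<open>Smooth functions and compactly supported integrands\<close>

lemma smooth_fun_differentiable: "smooth_fun \<phi> \<Longrightarrow> \<phi> differentiable (at z)"
  unfolding smooth_fun_def by (metis UNIV_I differentiable_on_def dir_derivs.simps(1))

lemma smooth_fun_continuous_on: "smooth_fun \<phi> \<Longrightarrow> continuous_on S \<phi>"
  by (meson continuous_at_imp_continuous_on differentiable_imp_continuous_within smooth_fun_differentiable)

lemma continuous_on_frechet_derivative_smooth_fun:
  assumes "smooth_fun \<phi>"
  shows "continuous_on S (\<lambda>z. frechet_derivative \<phi> (at z) v)"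
proof -
  have "dir_derivs [v] \<phi> differentiable_on UNIV" using assms by (simp only: smooth_fun_def)
  then show ?thesis by (auto intro: continuous_on_subset differentiable_imp_continuous_on)
qed

lemma smooth_fun_has_real_derivative_line:
  fixes \<phi> :: "'a::real_normed_vector \<Rightarrow> real"
  assumes "smooth_fun \<phi>"
  shows "((\<lambda>s. \<phi> (z + s *\<^sub>R v)) has_real_derivative frechet_derivative \<phi> (at z) v) (at 0)"
proof -
  define D where "D = frechet_derivative \<phi> (at z)"
  have D: "(\<phi> has_derivative D) (at (z + 0 *\<^sub>R v))"
    unfolding D_def using smooth_fun_differentiable[OF assms, of z] frechet_derivative_works by auto
  have "((\<lambda>s::real. z + s *\<^sub>R v) has_derivative (\<lambda>s. s *\<^sub>R v)) (at 0)"
    by (auto intro!: derivative_eq_intros)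
  from has_derivative_compose[OF this D]
  have "((\<lambda>s. \<phi> (z + s *\<^sub>R v)) has_derivative (\<lambda>s. D (s *\<^sub>R v))) (at 0)" by (simp add: comp_def)
  moreover have "(\<lambda>s. D (s *\<^sub>R v)) = (\<lambda>s. D v * s)"
    using has_derivative_linear[OF D] by (auto simp: linear_scale mult.commute)
  ultimately show ?thesis unfolding D_def by (simp add: has_field_derivative_def)
qed

lemma line_derivative_eq_0_outside:
  fixes h :: "'a::real_normed_vector \<Rightarrow> real"
  assumes "closed C" "\<And>y. y \<notin> C \<Longrightarrow> h y = 0"
    and "((\<lambda>s. h (x + s *\<^sub>R e)) has_real_derivative g) (at 0)" and "x \<notin> C"
  shows "g = 0"
proof -
  have "open ((\<lambda>s::real. x + s *\<^sub>R e) -` (- C))"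
    using assms(1) by (intro open_vimage continuous_intros) auto
  then have "\<forall>\<^sub>F s in nhds 0. x + s *\<^sub>R e \<notin> C"
    using eventually_nhds_in_open[of _ "0::real"] assms(4) by fastforce
  then have "\<forall>\<^sub>F s in nhds 0. h (x + s *\<^sub>R e) = 0"
    by eventually_elim (use assms(2) in auto)
  then have "((\<lambda>s. h (x + s *\<^sub>R e)) has_real_derivative 0) (at 0)"
    by (rule DERIV_cong_ev[OF refl _ refl, THEN iffD2]) (auto intro: derivative_eq_intros)
  then show ?thesis using DERIV_unique assms(3) by blast
qed

lemma frechet_derivative_smooth_fun_outside_support:
  fixes \<phi> :: "'a::real_normed_vector \<Rightarrow> real"
  assumes "smooth_fun \<phi>" "z \<notin> closure {z. \<phi> z \<noteq> 0}"
  shows "frechet_derivative \<phi> (at z) v = 0"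
  using closure_subset[of "{z. \<phi> z \<noteq> 0}"]
  by (intro line_derivative_eq_0_outside[OF closed_closure _ smooth_fun_has_real_derivative_line[OF assms(1)] assms(2)])
    auto

lemma bounded_continuous_compact_support:
  fixes g :: "'a::topological_space \<Rightarrow> 'b::real_normed_vector"
  assumes "continuous_on UNIV g" "compact C" "\<And>x. x \<notin> C \<Longrightarrow> g x = 0"
  obtains M where "M > 0" "\<And>x. norm (g x) \<le> M"
proof -
  obtain M where "M > 0" "\<And>x. x \<in> C \<Longrightarrow> norm (g x) \<le> M"
    using compact_imp_bounded[OF compact_continuous_image[OF continuous_on_subset[OF assms(1)] assms(2)]]
    by (auto simp: bounded_pos)
  with assms(3) show ?thesis by (metis norm_zero order_less_imp_le that)
qed

lemma integrable_continuous_compact_support: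
  fixes g :: "'a::euclidean_space \<Rightarrow> 'b::{banach, second_countable_topology}"
  assumes "continuous_on UNIV g" "compact C" "\<And>x. x \<notin> C \<Longrightarrow> g x = 0"
  shows "integrable lborel g"
proof -
  have "integrable lborel (\<lambda>x. indicator C x *\<^sub>R g x)"
    using assms by (intro borel_integrable_compact) (auto intro: continuous_on_subset)
  also have "(\<lambda>x. indicator C x *\<^sub>R g x) = g"
    using assms(3) by (auto simp: indicator_def)
  finally show ?thesis .
qed

lemma integrable_norm_powr_mult_compact_support:
  fixes g :: "'a::euclidean_space \<Rightarrow> real" and p :: real
  assumes p: "0 \<le> p" "p < DIM('a)" and g: "continuous_on UNIV g"
    and C: "compact C" "\<And>x. x \<notin> C \<Longrightarrow> g x = 0"
  shows "integrable lborel (\<lambda>x. norm x powr (-p) * g x)"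
proof -
  obtain B where B: "B > 0" "\<And>x. x \<in> C \<Longrightarrow> norm x \<le> B"
    using compact_imp_bounded[OF C(1)] by (auto simp: bounded_pos)
  obtain M where M: "\<And>x. norm (g x) \<le> M" using bounded_continuous_compact_support[OF g C] by blast
  have "integrable lborel (\<lambda>x::'a. M * (indicator (cball 0 B) x * norm x powr (-p)))"
    using set_integrable_norm_powr_cball[OF B(1) p] by (simp add: set_integrable_def)
  then show ?thesis
  proof (rule Bochner_Integration.integrable_bound)
    have "g \<in> borel_measurable borel" using g by (rule borel_measurable_continuous_onI)
    then show "(\<lambda>x. norm x powr (-p) * g x) \<in> borel_measurable lborel" by measurable
    show "AE x in lborel. norm (norm x powr (-p) * g x)
        \<le> norm (M * (indicator (cball 0 B) x * norm x powr (-p)))"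
      using M B(2) C(2)
      by (intro AE_I2, case_tac "x \<in> C") (auto simp: abs_mult mult.commute intro!: mult_right_mono order_trans[OF _ abs_ge_self])
  qed
qed

lemma integral_difference_quotient_eq_0:
  fixes h :: "'a::euclidean_space \<Rightarrow> real"
  assumes h: "continuous_on UNIV h" and C: "compact C" "\<And>x. x \<notin> C \<Longrightarrow> h x = 0"
  shows "(\<integral>x. (h (x + v) - h x) / s \<partial>lborel) = 0"
proof -
  have "integrable lborel (\<lambda>x. h (x + v))"
  proof (rule integrable_continuous_compact_support)
    show "compact ((\<lambda>x. x - v) ` C)" by (intro compact_continuous_image continuous_intros C)
    show "h (x + v) = 0" if "x \<notin> (\<lambda>x. x - v) ` C" for x
      using that C(2) by (metis add_diff_cancel image_eqI)
  qed (auto intro!: continuous_on_compose2[OF h] continuous_intros)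
  moreover have "(\<integral>x. h (x + v) \<partial>lborel) = integral\<^sup>L lborel h"
  proof -
    have [measurable]: "h \<in> borel_measurable borel" using h by (rule borel_measurable_continuous_onI)
    have "integral\<^sup>L lborel h = integral\<^sup>L (distr lborel borel ((+) v)) h" by (simp add: lborel_distr_plus)
    also have "\<dots> = (\<integral>x. h (v + x) \<partial>lborel)" by (intro integral_distr) auto
    finally show ?thesis by (simp add: add.commute)
  qed
  ultimately show ?thesis using integrable_continuous_compact_support[OF h C] by simp
qed

lemma abs_difference_quotient_le:
  fixes h :: "'a::real_normed_vector \<Rightarrow> real"
  assumes d: "\<And>y. ((\<lambda>s. h (y + s *\<^sub>R e)) has_real_derivative g y) (at 0)"
    and M: "\<And>y. \<bar>g y\<bar> \<le> M" and s: "s > 0"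
  shows "\<bar>(h (x + s *\<^sub>R e) - h x) / s\<bar> \<le> M"
proof -
  have "((\<lambda>r. h (x + r *\<^sub>R e)) has_real_derivative g (x + r *\<^sub>R e)) (at r)" for r
  proof -
    have "((\<lambda>t. h (x + (t + r) *\<^sub>R e)) has_real_derivative g (x + r *\<^sub>R e)) (at 0)"
      using d[of "x + r *\<^sub>R e"] by (simp add: scaleR_add_left algebra_simps)
    then show ?thesis using DERIV_shift[of "\<lambda>r. h (x + r *\<^sub>R e)" _ 0 r] by simp
  qed
  from MVT2[OF s this] obtain r where "h (x + s *\<^sub>R e) - h x = s * g (x + r *\<^sub>R e)" by auto
  then show ?thesis using s M[of "x + r *\<^sub>R e"] by (simp add: abs_mult)
qed

lemma abs_difference_quotient_le_indicator:
  fixes h :: "'a::real_normed_vector \<Rightarrow> real"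
  assumes d: "\<And>y. ((\<lambda>s. h (y + s *\<^sub>R e)) has_real_derivative g y) (at 0)"
    and M: "\<And>y. \<bar>g y\<bar> \<le> M" and h0: "\<And>x. x \<notin> C \<Longrightarrow> h x = 0" and s: "0 < s" "s \<le> 1"
  shows "\<bar>(h (x + s *\<^sub>R e) - h x) / s\<bar> \<le> M * indicator ((\<lambda>(x, r). x - r *\<^sub>R e) ` (C \<times> {0..1})) x"
proof (cases "x \<in> (\<lambda>(x, r). x - r *\<^sub>R e) ` (C \<times> {0..1})")
  case False
  then have "x \<notin> C" "x + s *\<^sub>R e \<notin> C"
    using s image_eqI[of x "\<lambda>(x, r). x - r *\<^sub>R e" "(x, 0)"]
      image_eqI[of x "\<lambda>(x, r). x - r *\<^sub>R e" "(x + s *\<^sub>R e, s)"] by auto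
  with False show ?thesis by (simp add: h0)
qed (use abs_difference_quotient_le[OF d M s(1)] in simp)

lemma tendsto_difference_quotient:
  fixes h :: "'a::real_normed_vector \<Rightarrow> real"
  assumes "((\<lambda>r. h (x + r *\<^sub>R e)) has_real_derivative g) (at 0)" "filterlim s (at 0) sequentially"
  shows "(\<lambda>k. (h (x + s k *\<^sub>R e) - h x) / s k) \<longlonglongrightarrow> g"
proof -
  have "((\<lambda>r. (h (x + r *\<^sub>R e) - h (x + 0 *\<^sub>R e)) / (r - 0)) \<longlongrightarrow> g) (at 0)"
    using assms(1) by (simp only: has_field_derivative_iff)
  from filterlim_compose[OF this assms(2)] show ?thesis by simp
qed

lemma integral_line_derivative_eq_0:
  fixes h g :: "'a::euclidean_space \<Rightarrow> real"
  assumes h: "continuous_on UNIV h" and g: "continuous_on UNIV g"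
    and C: "compact C" and h0: "\<And>x. x \<notin> C \<Longrightarrow> h x = 0"
    and d: "\<And>x. ((\<lambda>s. h (x + s *\<^sub>R e)) has_real_derivative g x) (at 0)"
  shows "integrable lborel g" and "integral\<^sup>L lborel g = 0"
proof -
  have g0: "g x = 0" if "x \<notin> C" for x
    using line_derivative_eq_0_outside[OF compact_imp_closed[OF C] h0 d that] .
  show "integrable lborel g" by (rule integrable_continuous_compact_support[OF g C g0])
  obtain M where M: "\<And>x. \<bar>g x\<bar> \<le> M"
    using bounded_continuous_compact_support[OF g C g0] by (metis real_norm_def)
  define C' where "C' = (\<lambda>(x, r). x - r *\<^sub>R e) ` (C \<times> {0..1::real})"
  have C': "compact C'"
    unfolding C'_def case_prod_unfold
    by (intro compact_continuous_image continuous_intros compact_Times C compact_Icc)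
  define s :: "nat \<Rightarrow> real" where "s k = 1 / Suc k" for k
  have s: "0 < s k" "s k \<le> 1" for k by (auto simp: s_def)
  define D where "D k x = (h (x + s k *\<^sub>R e) - h x) / s k" for k x
  have [measurable]: "h \<in> borel_measurable borel" "g \<in> borel_measurable borel"
    using h g by (auto intro: borel_measurable_continuous_onI)
  have "(\<lambda>k. integral\<^sup>L lborel (D k)) \<longlonglongrightarrow> integral\<^sup>L lborel g"
  proof (rule integral_dominated_convergence[where w="\<lambda>x. M * indicator C' x"])
    show "integrable lborel (\<lambda>x. M * indicator C' x)"
      using C' emeasure_bounded_finite[OF compact_imp_bounded[OF C']]
      by (intro integrable_mult_right integrable_real_indicator) (auto intro: borel_compact)
    have "filterlim s (at 0) sequentially"
      using s(1) LIMSEQ_inverse_real_of_nat unfolding s_def[abs_def]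
      by (auto simp: filterlim_at inverse_eq_divide intro!: always_eventually)
    then show "AE x in lborel. (\<lambda>k. D k x) \<longlonglongrightarrow> g x"
      unfolding D_def using tendsto_difference_quotient[OF d] by simp
    show "AE x in lborel. norm (D k x) \<le> M * indicator C' x" for k
      unfolding D_def C'_def using abs_difference_quotient_le_indicator[OF d M h0 s] by simp
  qed (simp_all add: D_def[abs_def])
  moreover have "integral\<^sup>L lborel (D k) = 0" for k
    unfolding D_def by (rule integral_difference_quotient_eq_0[OF h C h0])
  ultimately show "integral\<^sup>L lborel g = 0" by (simp add: LIMSEQ_const_iff)
qed

section \<open>The divergence of the radial field of a negative power\<close>

lemma has_real_derivative_line_norm_sq_powr:
  fixes x v :: "'a::real_inner"
  assumes "norm x^2 + \<epsilon> > 0"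
  shows "((\<lambda>s. (norm (x + s *\<^sub>R v)^2 + \<epsilon>) powr q) has_real_derivative
           q * (norm x^2 + \<epsilon>) powr (q - 1) * (2 * (x \<bullet> v))) (at 0)"
proof -
  have sq: "norm (x + s *\<^sub>R v)^2 = norm x^2 + 2 * s * (x \<bullet> v) + s^2 * norm v^2" for s
    by (simp only: power2_norm_eq_inner)
      (simp add: inner_add_left inner_add_right inner_commute[of v x] algebra_simps power2_eq_square)
  have "((\<lambda>s. norm (x + s *\<^sub>R v)^2 + \<epsilon>) has_real_derivative 2 * (x \<bullet> v)) (at 0)"
    unfolding sq by (auto intro!: derivative_eq_intros)
  from DERIV_fun_powr[OF this, of q] show ?thesis using assms by simp
qed

lemma grad_eqI:
  assumes "\<And>i. ((\<lambda>s. f (x + s *\<^sub>R axis i 1)) has_real_derivative D $ i) (at 0)"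
  shows "grad f x = D"
  using assms by (simp add: grad_def vec_eq_iff DERIV_imp_deriv)

lemma square_powr:
  assumes "0 \<le> (y::real)"
  shows "(y^2) powr a = y powr (2 * a)"
proof (cases "y = 0")
  case False
  then have sq: "y^2 = y powr 2" using assms by (simp add: powr_numeral)
  show ?thesis unfolding sq powr_powr by simp
qed simp

definition smoothed_radial_field :: "real \<Rightarrow> real \<Rightarrow> 'a::real_normed_vector \<Rightarrow> 'a" where
  "smoothed_radial_field p \<epsilon> x = (norm x^2 + \<epsilon>) powr (-p/2) *\<^sub>R x"

definition smoothed_radial_div :: "real \<Rightarrow> real \<Rightarrow> real^'n \<Rightarrow> real" where
  "smoothed_radial_div p \<epsilon> x =
     CARD('n) * (norm x^2 + \<epsilon>) powr (-p/2) - p * norm x^2 * (norm x^2 + \<epsilon>) powr (-p/2 - 1)"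

lemma has_real_derivative_smoothed_radial_field_component:
  fixes x :: "real^'n"
  assumes "norm x^2 + \<epsilon> > 0"
  shows "((\<lambda>s. smoothed_radial_field p \<epsilon> (x + s *\<^sub>R axis i 1) $ i) has_real_derivative
           (norm x^2 + \<epsilon>) powr (-p/2) - p * (x$i)^2 * (norm x^2 + \<epsilon>) powr (-p/2 - 1)) (at 0)"
proof -
  have "((\<lambda>s. x$i + s) has_real_derivative 1) (at 0)" by (auto intro!: derivative_eq_intros)
  from DERIV_mult[OF this has_real_derivative_line_norm_sq_powr[OF assms, of "axis i 1" "-p/2"]]
  have "((\<lambda>s. smoothed_radial_field p \<epsilon> (x + s *\<^sub>R axis i 1) $ i) has_real_derivative
      1 * (norm x^2 + \<epsilon>) powr (-p/2)
      + (x$i + 0) * (-p/2 * (norm x^2 + \<epsilon>) powr (-p/2 - 1) * (2 * (x \<bullet> axis i 1)))) (at 0)"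
    by (simp add: smoothed_radial_field_def mult.commute)
  then show ?thesis by (simp add: inner_axis power2_eq_square mult_ac)
qed

lemma sum_square_components: "(\<Sum>i\<in>UNIV. (x$i)^2) = norm (x::real^'n)^2"
  unfolding power2_norm_eq_inner inner_vec_def by (simp add: power2_eq_square)

lemma sum_partials_smoothed_radial_field:
  fixes x :: "real^'n"
  shows "(\<Sum>i\<in>UNIV. (norm x^2 + \<epsilon>) powr (-p/2) - p * (x$i)^2 * (norm x^2 + \<epsilon>) powr (-p/2 - 1))
       = smoothed_radial_div p \<epsilon> x"
  by (simp add: smoothed_radial_div_def sum_subtractf sum_distrib_left[symmetric]
      sum_distrib_right[symmetric] sum_square_components)

lemma smoothed_radial_field_0: "smoothed_radial_field p 0 x = norm x powr (-p) *\<^sub>R x"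
  by (simp add: smoothed_radial_field_def square_powr)

lemma smoothed_radial_div_0:
  fixes x :: "real^'n" and p :: real
  assumes "x \<noteq> 0"
  shows "smoothed_radial_div p 0 x = (CARD('n) - p) * norm x powr (-p)"
proof -
  have sq: "norm x^2 = norm x powr 2" using assms by (simp add: powr_numeral)
  have "norm x^2 * (norm x^2) powr (-p/2 - 1) = norm x powr 2 * norm x powr (-p - 2)"
    unfolding square_powr[OF norm_ge_zero] by (subst sq) (simp add: algebra_simps)
  also have "\<dots> = norm x powr (-p)" by (subst powr_add[symmetric]) simp
  finally have "norm x^2 * (norm x^2) powr (-p/2 - 1) = norm x powr (-p)" .
  moreover have "(norm x^2) powr (-p/2) = norm x powr (-p)"
    by (simp add: square_powr)
  ultimately show ?thesis by (simp add: smoothed_radial_div_def algebra_simps mult.assoc)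
qed

lemma smoothed_powr_le:
  fixes y p :: real
  assumes "0 < y" "0 \<le> \<epsilon>" "0 \<le> p"
  shows "(y^2 + \<epsilon>) powr (-p/2) \<le> y powr (-p)"
    and "y^2 * (y^2 + \<epsilon>) powr (-p/2 - 1) \<le> (y^2 + \<epsilon>) powr (-p/2)"
proof -
  have "(y^2 + \<epsilon>) powr (-p/2) \<le> (y^2) powr (-p/2)"
    using assms by (intro powr_mono2') auto
  then show "(y^2 + \<epsilon>) powr (-p/2) \<le> y powr (-p)"
    using assms by (simp add: square_powr)
  have "y^2 * (y^2 + \<epsilon>) powr (-p/2 - 1) \<le> (y^2 + \<epsilon>) powr 1 * (y^2 + \<epsilon>) powr (-p/2 - 1)"
    using assms by (intro mult_right_mono) auto
  also have "\<dots> = (y^2 + \<epsilon>) powr (-p/2)" by (subst powr_add[symmetric]) simp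
  finally show "y^2 * (y^2 + \<epsilon>) powr (-p/2 - 1) \<le> (y^2 + \<epsilon>) powr (-p/2)" .
qed

lemma norm_smoothed_radial_field_le:
  assumes "x \<noteq> 0" "0 \<le> \<epsilon>" "0 \<le> p"
  shows "norm (smoothed_radial_field p \<epsilon> x) \<le> norm x * norm x powr (-p)"
  using smoothed_powr_le(1)[of "norm x" \<epsilon> p] assms
  by (simp add: smoothed_radial_field_def mult.commute mult_right_mono)

lemma abs_smoothed_radial_div_le:
  fixes x :: "real^'n" and p :: real
  assumes "x \<noteq> 0" "0 \<le> \<epsilon>" "0 \<le> p"
  shows "\<bar>smoothed_radial_div p \<epsilon> x\<bar> \<le> (CARD('n) + p) * norm x powr (-p)"
proof -
  define a where "a = (norm x^2 + \<epsilon>) powr (-p/2)"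
  define b where "b = norm x^2 * (norm x^2 + \<epsilon>) powr (-p/2 - 1)"
  have ab: "a \<le> norm x powr (-p)" "b \<le> a" "0 \<le> a" "0 \<le> b"
    using smoothed_powr_le[of "norm x" \<epsilon> p] assms by (auto simp: a_def b_def)
  have "\<bar>CARD('n) * a - p * b\<bar> \<le> CARD('n) * a + p * b"
    using ab assms(3) by (intro abs_diff_le_iff[THEN iffD2] conjI) (auto intro: order_trans[of _ 0])
  also have "\<dots> \<le> CARD('n) * norm x powr (-p) + p * norm x powr (-p)"
    using ab assms(3) by (intro add_mono mult_left_mono) auto
  finally have "\<bar>CARD('n) * a - p * b\<bar> \<le> (CARD('n) + p) * norm x powr (-p)"
    by (simp add: algebra_simps)
  then show ?thesis by (simp add: smoothed_radial_div_def a_def b_def mult.assoc)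
qed

lemma smoothed_radial_integrand_bound:
  fixes x v :: "real^'n" and p :: real
  assumes "x \<noteq> 0" "0 \<le> \<epsilon>" "0 \<le> p" "norm x \<le> B"
  shows "\<bar>smoothed_radial_div p \<epsilon> x * a + smoothed_radial_field p \<epsilon> x \<bullet> v\<bar>
         \<le> ((CARD('n) + p) * \<bar>a\<bar> + B * norm v) * norm x powr (-p)"
proof -
  have "\<bar>smoothed_radial_div p \<epsilon> x * a + smoothed_radial_field p \<epsilon> x \<bullet> v\<bar>
      \<le> \<bar>smoothed_radial_div p \<epsilon> x\<bar> * \<bar>a\<bar> + norm (smoothed_radial_field p \<epsilon> x) * norm v"
    by (rule order_trans[OF abs_triangle_ineq add_mono]) (auto simp: abs_mult Cauchy_Schwarz_ineq2)
  also have "\<dots> \<le> ((CARD('n) + p) * norm x powr (-p)) * \<bar>a\<bar> + (B * norm x powr (-p)) * norm v"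
    using abs_smoothed_radial_div_le[OF assms(1-3)] norm_smoothed_radial_field_le[OF assms(1-3)] assms(4)
    by (intro add_mono mult_right_mono) (auto intro: order_trans[OF _ mult_right_mono])
  finally show ?thesis by (simp add: algebra_simps)
qed

lemma tendsto_smoothed_radial_integrand:
  fixes x v :: "real^'n" and p :: real
  assumes x: "x \<noteq> 0" and \<epsilon>: "\<epsilon> \<longlonglongrightarrow> 0"
  shows "(\<lambda>k. smoothed_radial_div p (\<epsilon> k) x * a + smoothed_radial_field p (\<epsilon> k) x \<bullet> v)
         \<longlonglongrightarrow> (CARD('n) - p) * norm x powr (-p) * a + norm x powr (-p) * (x \<bullet> v)"
proof -
  have "(\<lambda>k. smoothed_radial_div p (\<epsilon> k) x) \<longlonglongrightarrow> smoothed_radial_div p 0 x"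
    by (rule isCont_tendsto_compose[OF _ \<epsilon>])
      (use x in \<open>auto simp: smoothed_radial_div_def intro!: continuous_intros\<close>)
  moreover have "(\<lambda>k. smoothed_radial_field p (\<epsilon> k) x) \<longlonglongrightarrow> smoothed_radial_field p 0 x"
    by (rule isCont_tendsto_compose[OF _ \<epsilon>])
      (use x in \<open>auto simp: smoothed_radial_field_def intro!: continuous_intros\<close>)
  ultimately have "(\<lambda>k. smoothed_radial_div p (\<epsilon> k) x * a + smoothed_radial_field p (\<epsilon> k) x \<bullet> v)
      \<longlonglongrightarrow> smoothed_radial_div p 0 x * a + smoothed_radial_field p 0 x \<bullet> v"
    by (intro tendsto_add tendsto_mult tendsto_inner tendsto_const)
  then show ?thesis by (simp add: smoothed_radial_div_0[OF x] smoothed_radial_field_0)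
qed

lemma grad_continuous_compact_support:
  fixes f :: "real^'n \<Rightarrow> real"
  assumes C: "closed C" "\<And>x. x \<notin> C \<Longrightarrow> f x = 0"
    and df: "\<And>x i. ((\<lambda>s. f (x + s *\<^sub>R axis i 1)) has_real_derivative df i x) (at 0)"
      "\<And>i. continuous_on UNIV (df i)"
  shows "continuous_on UNIV (\<lambda>x. grad f x)" and "\<And>x. x \<notin> C \<Longrightarrow> grad f x = 0"
proof -
  have grad: "grad f x = (\<chi> i. df i x)" for x by (rule grad_eqI) (simp add: df(1))
  show "continuous_on UNIV (\<lambda>x. grad f x)" unfolding grad by (intro continuous_on_vec_lambda df(2))
  show "grad f x = 0" if "x \<notin> C" for x
    using line_derivative_eq_0_outside[OF C df(1) that] by (simp add: grad vec_eq_iff)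
qed

lemma integral_smoothed_radial_divergence:
  fixes f :: "real^'n \<Rightarrow> real"
  assumes \<epsilon>: "\<epsilon> > 0" and f: "continuous_on UNIV f" and C: "compact C" "\<And>x. x \<notin> C \<Longrightarrow> f x = 0"
    and df: "\<And>x i. ((\<lambda>s. f (x + s *\<^sub>R axis i 1)) has_real_derivative df i x) (at 0)"
      "\<And>i. continuous_on UNIV (df i)"
  shows "integrable lborel (\<lambda>x. smoothed_radial_div p \<epsilon> x * f x + smoothed_radial_field p \<epsilon> x \<bullet> grad f x)"
    and "(\<integral>x. smoothed_radial_div p \<epsilon> x * f x + smoothed_radial_field p \<epsilon> x \<bullet> grad f x \<partial>lborel) = 0"
proof -
  have pos: "norm y^2 + \<epsilon> > 0" for y :: "real^'n" using \<epsilon> by (simp add: add_nonneg_pos)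
  then have nz: "norm y^2 + \<epsilon> \<noteq> 0" for y :: "real^'n" by (metis less_irrefl)
  have Vc: "continuous_on UNIV (\<lambda>y::real^'n. smoothed_radial_field p \<epsilon> y $ i)" for i
    unfolding smoothed_radial_field_def by (auto intro!: continuous_intros simp: nz)
  define \<rho> where "\<rho> i y = (norm y^2 + \<epsilon>) powr (-p/2) - p * (y$i)^2 * (norm y^2 + \<epsilon>) powr (-p/2 - 1)"
    for i :: 'n and y :: "real^'n"
  define g where "g i y = \<rho> i y * f y + smoothed_radial_field p \<epsilon> y $ i * df i y" for i y
  have g: "integrable lborel (g i)" "integral\<^sup>L lborel (g i) = 0" for i :: 'n
  proof -
    have "continuous_on UNIV (\<rho> i)"
      unfolding \<rho>_def[abs_def] by (auto intro!: continuous_intros simp: nz)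
    then have "continuous_on UNIV (g i)"
      unfolding g_def[abs_def] by (intro continuous_intros Vc f df(2))
    moreover have "((\<lambda>s. smoothed_radial_field p \<epsilon> (y + s *\<^sub>R axis i 1) $ i * f (y + s *\<^sub>R axis i 1))
        has_real_derivative g i y) (at 0)" for y
      using DERIV_mult[OF has_real_derivative_smoothed_radial_field_component[OF pos] df(1)]
      by (simp add: g_def \<rho>_def mult.commute)
    moreover have "continuous_on UNIV (\<lambda>y. smoothed_radial_field p \<epsilon> y $ i * f y)"
      by (intro continuous_intros Vc f)
    ultimately show "integrable lborel (g i)" "integral\<^sup>L lborel (g i) = 0"
      using integral_line_derivative_eq_0[OF _ _ C(1), of "\<lambda>y. smoothed_radial_field p \<epsilon> y $ i * f y"]
        C(2) by simp_all blast+
  qed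
  have gradf: "grad f y = (\<chi> i. df i y)" for y by (rule grad_eqI) (simp add: df(1))
  have "smoothed_radial_div p \<epsilon> y * f y + smoothed_radial_field p \<epsilon> y \<bullet> grad f y = (\<Sum>i\<in>UNIV. g i y)" for y
    by (simp add: g_def \<rho>_def gradf inner_vec_def sum.distrib sum_distrib_right
        flip: sum_partials_smoothed_radial_field)
  then show "integrable lborel (\<lambda>x. smoothed_radial_div p \<epsilon> x * f x + smoothed_radial_field p \<epsilon> x \<bullet> grad f x)"
    and "(\<integral>x. smoothed_radial_div p \<epsilon> x * f x + smoothed_radial_field p \<epsilon> x \<bullet> grad f x \<partial>lborel) = 0"
    using g by simp_all
qed

lemma integral_norm_powr_divergence_eq_0:
  fixes f :: "real^'n \<Rightarrow> real" and p :: real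
  assumes p: "0 \<le> p" "p < CARD('n)"
    and f: "continuous_on UNIV f" and C: "compact C" "\<And>x. x \<notin> C \<Longrightarrow> f x = 0"
    and df: "\<And>x i. ((\<lambda>s. f (x + s *\<^sub>R axis i 1)) has_real_derivative df i x) (at 0)"
      "\<And>i. continuous_on UNIV (df i)"
  shows "integrable lborel (\<lambda>x. (CARD('n) - p) * norm x powr (-p) * f x + norm x powr (-p) * (x \<bullet> grad f x))"
      (is "integrable lborel ?G0")
    and "(\<integral>x. (CARD('n) - p) * norm x powr (-p) * f x + norm x powr (-p) * (x \<bullet> grad f x) \<partial>lborel) = 0"
proof -
  note grad = grad_continuous_compact_support[OF compact_imp_closed[OF C(1)] C(2) df]
  obtain B where B: "\<And>y. y \<in> C \<Longrightarrow> norm y \<le> B"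
    using compact_imp_bounded[OF C(1)] by (auto simp: bounded_iff)
  define \<epsilon> :: "nat \<Rightarrow> real" where "\<epsilon> k = 1 / Suc k" for k
  have \<epsilon>: "\<epsilon> \<longlonglongrightarrow> 0" "0 < \<epsilon> k" for k
    unfolding \<epsilon>_def using LIMSEQ_inverse_real_of_nat by (simp_all add: inverse_eq_divide)
  define G where "G k y = smoothed_radial_div p (\<epsilon> k) y * f y + smoothed_radial_field p (\<epsilon> k) y \<bullet> grad f y"
    for k y
  define h where "h y = (CARD('n) + p) * \<bar>f y\<bar> + B * norm (grad f y)" for y
  have G: "integrable lborel (G k)" "integral\<^sup>L lborel (G k) = 0" for k
    unfolding G_def[abs_def] using integral_smoothed_radial_divergence[OF \<epsilon>(2) f C df] by simp_all
  have [measurable]: "f \<in> borel_measurable borel" "(\<lambda>y. grad f y) \<in> borel_measurable borel"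
    using f grad(1) by (auto intro: borel_measurable_continuous_onI)
  have "?G0 \<in> borel_measurable lborel" by measurable
  moreover have "G k \<in> borel_measurable lborel" for k using G(1) by (rule borel_measurable_integrable)
  moreover have "integrable lborel (\<lambda>y. norm y powr (-p) * h y)"
    unfolding h_def[abs_def] using p C(2) grad(2)
    by (intro integrable_norm_powr_mult_compact_support[OF _ _ _ C(1)] continuous_intros f grad(1)) auto
  moreover have "AE y in lborel. (\<lambda>k. G k y) \<longlonglongrightarrow> ?G0 y"
    using AE_lborel_singleton[of 0]
    by eventually_elim (unfold G_def, rule tendsto_smoothed_radial_integrand[OF _ \<epsilon>(1)])
  moreover have "AE y in lborel. norm (G k y) \<le> norm y powr (-p) * h y" for k
    using AE_lborel_singleton[of 0]
  proof eventually_elim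
    case (elim y)
    show ?case
    proof (cases "y \<in> C")
      case True
      then show ?thesis
        unfolding G_def real_norm_def h_def mult.commute[of "norm y powr (-p)"]
        by (intro smoothed_radial_integrand_bound[OF elim _ p(1) B]) (simp_all add: less_imp_le[OF \<epsilon>(2)])
    qed (simp add: G_def h_def C(2) grad(2))
  qed
  ultimately have "integrable lborel ?G0" "(\<lambda>k. integral\<^sup>L lborel (G k)) \<longlonglongrightarrow> integral\<^sup>L lborel ?G0"
    by (rule integrable_dominated_convergence, rule integral_dominated_convergence)
  then show "integrable lborel ?G0" "integral\<^sup>L lborel ?G0 = 0"
    using G(2) LIMSEQ_unique[OF _ tendsto_const] by simp_all
qed

lemma integral_norm_powr_inner_grad:
  fixes f :: "real^'n \<Rightarrow> real" and p :: real
  assumes p: "0 \<le> p" "p < CARD('n)"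
    and f: "continuous_on UNIV f" and C: "compact C" "\<And>x. x \<notin> C \<Longrightarrow> f x = 0"
    and df: "\<And>x i. ((\<lambda>s. f (x + s *\<^sub>R axis i 1)) has_real_derivative df i x) (at 0)"
      "\<And>i. continuous_on UNIV (df i)"
  shows "(\<integral>x. norm x powr (-p) * (x \<bullet> grad f x) \<partial>lborel)
       = - (CARD('n) - p) * (\<integral>x. norm x powr (-p) * f x \<partial>lborel)"
proof -
  note G0 = integral_norm_powr_divergence_eq_0[OF p f C df]
  have f_int: "integrable lborel (\<lambda>x. norm x powr (-p) * f x)"
    using p by (intro integrable_norm_powr_mult_compact_support[OF _ _ f C]) auto
  then have "integrable lborel (\<lambda>x. norm x powr (-p) * (x \<bullet> grad f x))"
    using Bochner_Integration.integrable_diff[OF G0(1) integrable_mult_right[OF f_int, of "CARD('n) - p"]]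
    by (simp add: mult.assoc)
  with f_int have "(\<integral>x. (CARD('n) - p) * norm x powr (-p) * f x + norm x powr (-p) * (x \<bullet> grad f x) \<partial>lborel)
      = (CARD('n) - p) * (\<integral>x. norm x powr (-p) * f x \<partial>lborel)
        + (\<integral>x. norm x powr (-p) * (x \<bullet> grad f x) \<partial>lborel)"
    by (simp add: mult.assoc)
  with G0(2) have "(CARD('n) - p) * (\<integral>x. norm x powr (-p) * f x \<partial>lborel)
      + (\<integral>x. norm x powr (-p) * (x \<bullet> grad f x) \<partial>lborel) = 0"
    by simp
  then show ?thesis by linarith
qed

section \<open>The stationary profile\<close>

lemma grad_ustar:
  fixes x :: "real^'n"
  assumes "x \<noteq> 0"
  shows "grad (ustar n) x = (- root 3 (9 * real n - 15) / 3 * norm x powr (-5/3)) *\<^sub>R x"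
proof (rule grad_eqI)
  fix i
  define a where "a = root 3 (9 * real n - 15)"
  have "ustar n y = - a * (norm y^2 + 0) powr (1/6)" for y :: "real^'n"
    by (simp add: ustar_def a_def square_powr)
  moreover have "(norm x^2) powr (1/6 - 1) = norm x powr (-5/3)"
    by (simp add: square_powr)
  ultimately show "((\<lambda>s. ustar n (x + s *\<^sub>R axis i 1)) has_real_derivative
      ((- a / 3 * norm x powr (-5/3)) *\<^sub>R x) $ i) (at 0)"
    using DERIV_cmult[OF has_real_derivative_line_norm_sq_powr[of x 0 "axis i 1" "1/6"], of "-a"] assms
    by (simp add: inner_axis mult_ac)
qed

lemma radial_deriv_ustar:
  fixes x :: "real^'n"
  assumes "x \<noteq> 0"
  shows "radial_deriv (ustar n) x = - root 3 (9 * real n - 15) / 3 * norm x powr (-2/3)"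
proof -
  define a where "a = root 3 (9 * real n - 15)"
  define v where "v = x /\<^sub>R norm x"
  have v: "norm v = 1" using assms by (simp add: v_def)
  have "\<forall>\<^sub>F r in nhds (norm x). 0 < r"
    using eventually_nhds_in_open[of "{0<..}" "norm x"] assms by simp
  then have ev: "\<forall>\<^sub>F r in nhds (norm x). - a * r powr (1/3) = ustar n (r *\<^sub>R v)"
    by eventually_elim (simp add: ustar_def a_def v)
  have "((\<lambda>r. - a * r powr (1/3)) has_real_derivative - a * (1/3 * norm x powr (1/3 - 1))) (at (norm x))"
    using assms by (intro DERIV_cmult has_real_derivative_powr) auto
  then have "((\<lambda>r. ustar n (r *\<^sub>R v)) has_real_derivative - a * (1/3 * norm x powr (1/3 - 1))) (at (norm x))"
    using DERIV_cong_ev[OF refl ev refl] by blast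
  then show ?thesis unfolding radial_deriv_def v_def[symmetric] by (simp add: DERIV_imp_deriv a_def)
qed

lemma ustar_mult_radial_deriv_cube:
  fixes x :: "real^'n"
  shows "ustar n x * radial_deriv (ustar n) x ^ 3
       = root 3 (9 * real n - 15) / 3 * (real n - 5/3) * norm x powr (-5/3)"
proof (cases "x = 0")
  case False
  define a where "a = root 3 (9 * real n - 15)"
  have "a^4 = a * a^3" by (simp add: eval_nat_numeral)
  also have "\<dots> = a * (9 * real n - 15)" by (simp add: a_def odd_real_root_pow)
  finally have a4: "a^4 / 27 = a / 3 * (real n - 5/3)" by (simp add: field_simps)
  have "ustar n x * radial_deriv (ustar n) x ^ 3
      = a^4 / 27 * (norm x powr (1/3) * (norm x powr (-2/3))^3)"
    unfolding radial_deriv_ustar[OF False] ustar_def a_def[symmetric]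
    by (simp add: power_mult_distrib power_divide eval_nat_numeral)
  also have "\<dots> = a^4 / 27 * norm x powr (-5/3)"
    using False by (simp add: powr_power powr_add[symmetric])
  also have "\<dots> = a / 3 * (real n - 5/3) * norm x powr (-5/3)" by (simp only: a4)
  finally show ?thesis by (simp only: a_def)
qed (simp add: ustar_def)

lemma set_integrable_ustar_mult_radial_deriv_cube:
  assumes "CARD('n) \<ge> 2" "R > 0"
  shows "set_integrable lborel (cball 0 R)
           (\<lambda>x::real^'n. ustar CARD('n) x * radial_deriv (ustar CARD('n)) x ^ 3)"
proof -
  have "set_integrable lborel (cball (0::real^'n) R) (\<lambda>x. norm x powr (-(5/3)))"
    using assms by (intro set_integrable_norm_powr_cball) auto
  then show ?thesis unfolding ustar_mult_radial_deriv_cube by simp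
qed

lemma set_integrable_grad_ustar:
  assumes "R > 0"
  shows "set_integrable lborel (cball 0 R) (grad (ustar n) :: real^'n \<Rightarrow> real^'n)"
proof -
  define c where "c = - root 3 (9 * real n - 15) / 3"
  define g where "g x = (c * norm x powr (-5/3)) *\<^sub>R x" for x :: "real^'n"
  have "set_integrable lborel (cball (0::real^'n) R) (\<lambda>x. norm x powr (-(2/3)))"
  proof (rule set_integrable_norm_powr_cball)
    have "1 \<le> real DIM(real^'n)"
      by (metis DIM_positive One_nat_def Suc_leI of_nat_1 of_nat_le_iff)
    then show "2/3 < real DIM(real^'n)" by linarith
  qed (use assms in auto)
  then have "set_integrable lborel (cball 0 R) (\<lambda>x::real^'n. \<bar>c\<bar> * norm x powr (-2/3))"
    by simp
  then have "set_integrable lborel (cball 0 R) g"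
    unfolding set_integrable_def
  proof (rule Bochner_Integration.integrable_bound)
    have [measurable]: "cball (0::real^'n) R \<in> sets borel" by simp
    show "(\<lambda>x. indicator (cball 0 R) x *\<^sub>R g x) \<in> borel_measurable lborel"
      unfolding g_def by measurable
    have "norm (g x) = \<bar>c\<bar> * norm x powr (-2/3)" for x
      using powr_mult_base[of "norm x" "-5/3"] by (simp add: g_def abs_mult mult_ac)
    then show "AE x in lborel. norm (indicator (cball 0 R) x *\<^sub>R g x)
        \<le> norm (indicator (cball 0 R) x *\<^sub>R (\<bar>c\<bar> * norm x powr (-2/3)))"
      by (intro AE_I2) (simp add: indicator_def)
  qed
  then show ?thesis
    unfolding set_integrable_def
    by (subst integrable_discrete_difference[where X="{0}" and g="\<lambda>x. indicator (cball 0 R) x *\<^sub>R g x"])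
       (auto simp: g_def c_def grad_ustar)
qed

lemma integral_grad_ustar_inner_grad:
  fixes f :: "real^'n \<Rightarrow> real"
  assumes n: "CARD('n) \<ge> 2"
    and f: "continuous_on UNIV f" and C: "compact C" "\<And>x. x \<notin> C \<Longrightarrow> f x = 0"
    and df: "\<And>x i. ((\<lambda>s. f (x + s *\<^sub>R axis i 1)) has_real_derivative df i x) (at 0)"
      "\<And>i. continuous_on UNIV (df i)"
  shows "(\<integral>x. grad (ustar CARD('n)) x \<bullet> grad f x \<partial>lborel)
       = (\<integral>x. ustar CARD('n) x * radial_deriv (ustar CARD('n)) x ^ 3 * f x \<partial>lborel)"
proof -
  define a where "a = root 3 (9 * real CARD('n) - 15)"
  \<comment> \<open>\<open>grad (ustar n) 0\<close> is a junk value; the origin is a null set.\<close>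
  have "(\<integral>x. grad (ustar CARD('n)) x \<bullet> grad f x \<partial>lborel)
      = (\<integral>x. - a / 3 * (norm x powr (-5/3) * (x \<bullet> grad f x)) \<partial>lborel)"
    by (rule integral_discrete_difference[where X="{0}"]) (auto simp: grad_ustar a_def)
  also have "\<dots> = - a / 3 * (\<integral>x. norm x powr (-5/3) * (x \<bullet> grad f x) \<partial>lborel)"
    by simp
  also have "\<dots> = - a / 3 * (- (CARD('n) - 5/3) * (\<integral>x. norm x powr (-5/3) * f x \<partial>lborel))"
    using integral_norm_powr_inner_grad[OF _ _ f C df, of "5/3"] n by simp
  also have "\<dots> = a / 3 * (CARD('n) - 5/3) * (\<integral>x. norm x powr (-5/3) * f x \<partial>lborel)"
    by (simp add: field_simps)
  also have "\<dots> = (\<integral>x. a / 3 * (CARD('n) - 5/3) * (norm x powr (-5/3) * f x) \<partial>lborel)"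
    by simp
  finally show ?thesis by (simp add: ustar_mult_radial_deriv_cube a_def mult.assoc)
qed

section \<open>Testing against space-time test functions\<close>

lemma deriv_smooth_fun_snd:
  fixes \<phi> :: "'a::real_normed_vector \<times> real \<Rightarrow> real"
  assumes "smooth_fun \<phi>"
  shows "deriv (\<lambda>s. \<phi> (x, s)) t = frechet_derivative \<phi> (at (x, t)) (0, 1)"
proof -
  have "((\<lambda>s. \<phi> (x, s + t)) has_real_derivative frechet_derivative \<phi> (at (x, t)) (0, 1)) (at 0)"
    using smooth_fun_has_real_derivative_line[OF assms, of "(x, t)" "(0, 1)"] by (simp add: add.commute)
  then show ?thesis using DERIV_shift[of "\<lambda>s. \<phi> (x, s)" _ 0 t] by (simp add: DERIV_imp_deriv)
qed

lemma integral_time_derivative_eq_0: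
  fixes \<phi> :: "'a::euclidean_space \<times> real \<Rightarrow> real" and U :: "'a \<Rightarrow> real"
  assumes sm: "smooth_fun \<phi>" and S: "compact (closure {z. \<phi> z \<noteq> 0})" and U: "continuous_on UNIV U"
  shows "integrable lborel (\<lambda>z. U (fst z) * frechet_derivative \<phi> (at z) (0, 1))"
    and "(\<integral>z. U (fst z) * frechet_derivative \<phi> (at z) (0, 1) \<partial>lborel) = 0"
proof -
  \<comment> \<open>\<open>U \<circ> fst\<close> is constant in time, so the integrand is a time derivative.\<close>
  have "((\<lambda>s. U (fst (z + s *\<^sub>R (0, 1))) * \<phi> (z + s *\<^sub>R (0, 1))) has_real_derivative
      U (fst z) * frechet_derivative \<phi> (at z) (0, 1)) (at 0)" for z
    using DERIV_cmult[OF smooth_fun_has_real_derivative_line[OF sm, of z "(0, 1)"]] by simp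
  moreover have "continuous_on UNIV (\<lambda>z. U (fst z) * \<phi> z)"
    "continuous_on UNIV (\<lambda>z. U (fst z) * frechet_derivative \<phi> (at z) (0, 1))"
    by (auto intro!: continuous_intros smooth_fun_continuous_on[OF sm]
        continuous_on_frechet_derivative_smooth_fun[OF sm] continuous_on_compose2[OF U])
  moreover have "U (fst z) * \<phi> z = 0" if "z \<notin> closure {z. \<phi> z \<noteq> 0}" for z
    using that closure_subset[of "{z. \<phi> z \<noteq> 0}"] by auto
  ultimately show "integrable lborel (\<lambda>z. U (fst z) * frechet_derivative \<phi> (at z) (0, 1))"
    and "(\<integral>z. U (fst z) * frechet_derivative \<phi> (at z) (0, 1) \<partial>lborel) = 0"
    using integral_line_derivative_eq_0[OF _ _ S] by blast+
qed

lemma integral_time_derivative_test_fun: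
  fixes \<phi> :: "'a::euclidean_space \<times> real \<Rightarrow> real" and U :: "'a \<Rightarrow> real"
  assumes \<phi>: "test_fun_on (A \<times> {0<..}) \<phi>" and U: "continuous_on UNIV U"
  shows "(LINT t:{0<..}|lborel. LINT x:A|lborel. deriv (\<lambda>s. \<phi> (x, s)) t * U x) = 0"
proof -
  have sm: "smooth_fun \<phi>" and S: "compact (closure {z. \<phi> z \<noteq> 0})"
    "closure {z. \<phi> z \<noteq> 0} \<subseteq> A \<times> {0<..}"
    using \<phi> by (auto simp: test_fun_on_def)
  define H where "H z = U (fst z) * frechet_derivative \<phi> (at z) (0, 1)" for z
  note H = integral_time_derivative_eq_0[OF sm S(1) U, folded H_def]
  have H_outside: "H (x, t) = 0" if "x \<notin> A \<or> t \<le> 0" for x t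
  proof -
    have "(x, t) \<notin> closure {z. \<phi> z \<noteq> 0}" using that S(2) by auto
    then show ?thesis by (simp add: H_def frechet_derivative_smooth_fun_outside_support[OF sm])
  qed
  have "(LINT x:A|lborel. deriv (\<lambda>s. \<phi> (x, s)) t * U x) = (\<integral>x. H (x, t) \<partial>lborel)" for t
    unfolding set_lebesgue_integral_def deriv_smooth_fun_snd[OF sm]
    by (intro Bochner_Integration.integral_cong) (auto simp: indicator_def H_outside, simp add: H_def)
  then have "(LINT t:{0<..}|lborel. LINT x:A|lborel. deriv (\<lambda>s. \<phi> (x, s)) t * U x)
      = (\<integral>t. \<integral>x. H (x, t) \<partial>lborel \<partial>lborel)"
    unfolding set_lebesgue_integral_def
    by (intro Bochner_Integration.integral_cong) (auto simp: indicator_def H_outside)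
  also have "\<dots> = integral\<^sup>L lborel H"
    using lborel_pair.integral_snd[of "\<lambda>x t. H (x, t)"] H(1) by (simp add: lborel_prod)
  finally show ?thesis using H(2) by simp
qed

lemma integral_grad_ustar_inner_grad_test_fun:
  fixes \<phi> :: "(real^'n) \<times> real \<Rightarrow> real"
  assumes n: "CARD('n) \<ge> 2" and \<phi>: "test_fun_on (ball 0 R \<times> T) \<phi>"
  shows "(LINT x:ball 0 R|lborel. grad (ustar CARD('n)) x \<bullet> grad (\<lambda>y. \<phi> (y, t)) x)
       = (LINT x:ball 0 R|lborel. ustar CARD('n) x * radial_deriv (ustar CARD('n)) x ^ 3 * \<phi> (x, t))"
proof -
  define S where "S = closure {z. \<phi> z \<noteq> 0}"
  have sm: "smooth_fun \<phi>" and S: "compact S" "S \<subseteq> ball 0 R \<times> T"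
    using \<phi> by (auto simp: test_fun_on_def S_def)
  define C where "C = fst ` S"
  have C: "compact C" "C \<subseteq> ball 0 R"
    using S unfolding C_def by (auto intro!: compact_continuous_image continuous_intros)
  have outside: "(y, t) \<notin> S" if "y \<notin> C" for y using that by (force simp: C_def)
  have not_in_C: "y \<notin> C" if "y \<notin> ball 0 R" for y using C(2) that by auto
  define df where "df i y = frechet_derivative \<phi> (at (y, t)) (axis i 1, 0)" for i y
  have f0: "\<phi> (y, t) = 0" if "y \<notin> C" for y
    using outside[OF that] closure_subset[of "{z. \<phi> z \<noteq> 0}"] by (auto simp: S_def)
  have df: "((\<lambda>s. \<phi> (y + s *\<^sub>R axis i 1, t)) has_real_derivative df i y) (at 0)" for y i
    using smooth_fun_has_real_derivative_line[OF sm, of "(y, t)" "(axis i 1, 0)"] by (simp add: df_def)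
  have df_cont: "continuous_on UNIV (df i)" for i
    unfolding df_def[abs_def]
    by (rule continuous_on_compose2[OF continuous_on_frechet_derivative_smooth_fun[OF sm]])
      (auto intro!: continuous_intros)
  have f_cont: "continuous_on UNIV (\<lambda>y. \<phi> (y, t))"
    by (rule continuous_on_compose2[OF smooth_fun_continuous_on[OF sm]]) (auto intro!: continuous_intros)
  have grad_0: "grad (\<lambda>y. \<phi> (y, t)) y = 0" if "y \<notin> C" for y
    by (rule grad_continuous_compact_support(2)[OF compact_imp_closed[OF C(1)] f0 df df_cont that])
  have "(LINT x:ball 0 R|lborel. grad (ustar CARD('n)) x \<bullet> grad (\<lambda>y. \<phi> (y, t)) x)
      = (\<integral>x. grad (ustar CARD('n)) x \<bullet> grad (\<lambda>y. \<phi> (y, t)) x \<partial>lborel)"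
    unfolding set_lebesgue_integral_def
    by (intro Bochner_Integration.integral_cong) (auto simp: indicator_def grad_0 not_in_C)
  also have "\<dots> = (\<integral>x. ustar CARD('n) x * radial_deriv (ustar CARD('n)) x ^ 3 * \<phi> (x, t) \<partial>lborel)"
    by (rule integral_grad_ustar_inner_grad[OF n f_cont C(1) f0 df df_cont])
  also have "\<dots> = (LINT x:ball 0 R|lborel. ustar CARD('n) x * radial_deriv (ustar CARD('n)) x ^ 3 * \<phi> (x, t))"
    unfolding set_lebesgue_integral_def
    by (intro Bochner_Integration.integral_cong) (auto simp: indicator_def f0 not_in_C)
  finally show ?thesis .
qed

theorem mainTheorem7:
  fixes R :: real
  assumes n2: "CARD('n) \<ge> 2"
    and R: "R > 0"
  defines "u \<equiv> (ustar CARD('n) :: real^'n \<Rightarrow> real)"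
  shows "loc_integrable_on (\<lambda>(x::real^'n, t::real). u x * (radial_deriv u x) ^ 3)
            (ball 0 R \<times> {0..})
       \<and> loc_integrable_on (\<lambda>(x::real^'n, t::real). grad u x) (ball 0 R \<times> {0..})
       \<and> (\<forall>\<phi> :: (real^'n) \<times> real \<Rightarrow> real. test_fun_on (ball 0 R \<times> {0<..}) \<phi> \<longrightarrow>
           - (LINT t:{0<..}|lborel. LINT x:ball 0 R|lborel.
                 deriv (\<lambda>s. \<phi> (x, s)) t * u x)
         = - (LINT t:{0<..}|lborel. LINT x:ball 0 R|lborel.
                 grad u x \<bullet> grad (\<lambda>y. \<phi> (y, t)) x)
           + (LINT t:{0<..}|lborel. LINT x:ball 0 R|lborel.
                 u x * (radial_deriv u x) ^ 3 * \<phi> (x, t)))"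
proof (intro conjI allI impI)
  show "loc_integrable_on (\<lambda>(x, t::real). u x * (radial_deriv u x) ^ 3) (ball 0 R \<times> {0..})"
    unfolding u_def using set_integrable_ustar_mult_radial_deriv_cube[OF n2 R]
    by (intro loc_integrable_on_time_independent) (auto elim: set_integrable_subset)
  show "loc_integrable_on (\<lambda>(x, t::real). grad u x) (ball 0 R \<times> {0..})"
    unfolding u_def
    by (intro loc_integrable_on_time_independent set_integrable_subset[OF set_integrable_grad_ustar[OF R]]) auto
  fix \<phi> :: "(real^'n) \<times> real \<Rightarrow> real"
  assume \<phi>: "test_fun_on (ball 0 R \<times> {0<..}) \<phi>"
  have "continuous_on UNIV u"
    unfolding u_def ustar_def[abs_def]
    by (intro continuous_on_mult_left continuous_on_powr' continuous_on_norm continuous_on_id) auto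
  then have "(LINT t:{0<..}|lborel. LINT x:ball 0 R|lborel. deriv (\<lambda>s. \<phi> (x, s)) t * u x) = 0"
    by (rule integral_time_derivative_test_fun[OF \<phi>])
  moreover have "(LINT x:ball 0 R|lborel. grad u x \<bullet> grad (\<lambda>y. \<phi> (y, t)) x)
      = (LINT x:ball 0 R|lborel. u x * (radial_deriv u x) ^ 3 * \<phi> (x, t))" for t
    unfolding u_def by (rule integral_grad_ustar_inner_grad_test_fun[OF n2 \<phi>])
  ultimately show "- (LINT t:{0<..}|lborel. LINT x:ball 0 R|lborel. deriv (\<lambda>s. \<phi> (x, s)) t * u x)
      = - (LINT t:{0<..}|lborel. LINT x:ball 0 R|lborel. grad u x \<bullet> grad (\<lambda>y. \<phi> (y, t)) x)
        + (LINT t:{0<..}|lborel. LINT x:ball 0 R|lborel. u x * (radial_deriv u x) ^ 3 * \<phi> (x, t))"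
    by simp
qed

end
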